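(* Let $D$ be a non-principal ultrafilter on $\omega$, $\mathbb P$ a poset, and $Q\subseteq\mathbb P$ suff-$D$-lim-linked, witnessed by $\lim^D:Q^\omega\to\mathbb P$. Then $Q$ is $D$-lim-linked, witnessed by the same function $\lim^D$. In particular, every suff-uf-lim-linked subset of a poset is uf-lim-linked.
   Context: For $Q\subseteq\mathbb P$, an ultrafilter $D$ on $\omega$ and $\lim^D:Q^\omega\to\mathbb P$, condition $(\star)_n$ says: whenever $\bar q^j=\langle q^j_m:m<\omega\rangle\in Q^\omega$ for $j<n$ and $r\in\mathbb P$ satisfies $r\leq\lim^D\bar q^j$ for all $j<n$, then $\{m<\omega: r \text{ and all } q^j_m\ (j<n)\text{ have a common extension}\}\in D$. $Q$ is suff-$D$-lim-linked if some $\lim^D:Q^\omega\to\mathbb P$ satisfies $(\star)_n$ for all $n<\omega$; suff-uf-lim-linked if this holds for every non-principal ultrafilter $D$. $Q$ is $D$-lim-linked, witnessed by $\lim^D:Q^\omega\to\mathbb P$, if there is a $\mathbb P$-name $\dot D'$ of an ultrafilter on $\omega$ extending $D$ such that for every $\bar q=\langle q_m\rangle\in Q^\omega$, $\lim^D\bar q\Vdash_{\mathbb P}\{m:q_m\in\dot G\}\in\dot D'$; uf-lim-linked if it is $D$-lim-linked for every non-principal ultrafilter $D$. *)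

theory Defs
  imports Main
begin

text \<open>A poset is a carrier set P with an order le (le r p means r is stronger than p).\<close>
definition poset :: "'a set \<Rightarrow> ('a \<Rightarrow> 'a \<Rightarrow> bool) \<Rightarrow> bool" where
  "poset P le \<longleftrightarrow> (\<forall>p\<in>P. le p p)
     \<and> (\<forall>p\<in>P. \<forall>q\<in>P. \<forall>r\<in>P. le p q \<longrightarrow> le q r \<longrightarrow> le p r)
     \<and> (\<forall>p\<in>P. \<forall>q\<in>P. le p q \<longrightarrow> le q p \<longrightarrow> p = q)"

definition nonprincipal_ultrafilter :: "nat set set \<Rightarrow> bool" where
  "nonprincipal_ultrafilter D \<longleftrightarrow> UNIV \<in> D \<and> {} \<notin> D
     \<and> (\<forall>A B. A \<in> D \<longrightarrow> A \<subseteq> B \<longrightarrow> B \<in> D)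
     \<and> (\<forall>A\<in>D. \<forall>B\<in>D. A \<inter> B \<in> D)
     \<and> (\<forall>A. A \<in> D \<or> - A \<in> D)
     \<and> (\<forall>n. {n} \<notin> D)"

definition seqs :: "'a set \<Rightarrow> (nat \<Rightarrow> 'a) set" where
  "seqs Q = {qs. \<forall>m. qs m \<in> Q}"

definition compat :: "'a set \<Rightarrow> ('a \<Rightarrow> 'a \<Rightarrow> bool) \<Rightarrow> 'a \<Rightarrow> 'a \<Rightarrow> bool" where
  "compat P le p q \<longleftrightarrow> (\<exists>r\<in>P. le r p \<and> le r q)"

definition lim_fun :: "'a set \<Rightarrow> 'a set \<Rightarrow> ((nat \<Rightarrow> 'a) \<Rightarrow> 'a) \<Rightarrow> bool" where
  "lim_fun P Q lim \<longleftrightarrow> (\<forall>qs\<in>seqs Q. lim qs \<in> P)"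

definition star_cond :: "'a set \<Rightarrow> ('a \<Rightarrow> 'a \<Rightarrow> bool) \<Rightarrow> 'a set \<Rightarrow> nat set set
    \<Rightarrow> ((nat \<Rightarrow> 'a) \<Rightarrow> 'a) \<Rightarrow> nat \<Rightarrow> bool" where
  "star_cond P le Q D lim n \<longleftrightarrow>
     (\<forall>qss :: nat \<Rightarrow> nat \<Rightarrow> 'a. (\<forall>j<n. qss j \<in> seqs Q) \<longrightarrow>
       (\<forall>r\<in>P. (\<forall>j<n. le r (lim (qss j))) \<longrightarrow>
          {m. \<exists>s\<in>P. le s r \<and> (\<forall>j<n. le s (qss j m))} \<in> D))"

definition suff_D_lim_linked_by :: "'a set \<Rightarrow> ('a \<Rightarrow> 'a \<Rightarrow> bool) \<Rightarrow> 'a set \<Rightarrow> nat set set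
    \<Rightarrow> ((nat \<Rightarrow> 'a) \<Rightarrow> 'a) \<Rightarrow> bool" where
  "suff_D_lim_linked_by P le Q D lim \<longleftrightarrow> lim_fun P Q lim \<and> (\<forall>n. star_cond P le Q D lim n)"

definition suff_uf_lim_linked :: "'a set \<Rightarrow> ('a \<Rightarrow> 'a \<Rightarrow> bool) \<Rightarrow> 'a set \<Rightarrow> bool" where
  "suff_uf_lim_linked P le Q \<longleftrightarrow>
     (\<forall>D. nonprincipal_ultrafilter D \<longrightarrow> (\<exists>lim. suff_D_lim_linked_by P le Q D lim))"

text \<open>Regular open subsets of P: these are the Boolean values [[phi]] = {p. p forces phi}.\<close>
definition reg_open :: "'a set \<Rightarrow> ('a \<Rightarrow> 'a \<Rightarrow> bool) \<Rightarrow> 'a set \<Rightarrow> bool" where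
  "reg_open P le U \<longleftrightarrow> U \<subseteq> P
     \<and> (\<forall>p\<in>U. \<forall>q\<in>P. le q p \<longrightarrow> q \<in> U)
     \<and> (\<forall>p\<in>P. (\<forall>q\<in>P. le q p \<longrightarrow> (\<exists>r\<in>P. le r q \<and> r \<in> U)) \<longrightarrow> p \<in> U)"

text \<open>A (canonical) P-name X of a subset of omega, given by X m = {p. p forces m in X}.\<close>
definition nat_name :: "'a set \<Rightarrow> ('a \<Rightarrow> 'a \<Rightarrow> bool) \<Rightarrow> (nat \<Rightarrow> 'a set) \<Rightarrow> bool" where
  "nat_name P le X \<longleftrightarrow> (\<forall>m. reg_open P le (X m))"

definition forces_subset :: "'a set \<Rightarrow> ('a \<Rightarrow> 'a \<Rightarrow> bool) \<Rightarrow> 'a \<Rightarrow> (nat \<Rightarrow> 'a set)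
    \<Rightarrow> (nat \<Rightarrow> 'a set) \<Rightarrow> bool" where
  "forces_subset P le p X Y \<longleftrightarrow> (\<forall>m. \<forall>r\<in>P. le r p \<longrightarrow> r \<in> X m \<longrightarrow> r \<in> Y m)"

definition name_inter :: "(nat \<Rightarrow> 'a set) \<Rightarrow> (nat \<Rightarrow> 'a set) \<Rightarrow> nat \<Rightarrow> 'a set" where
  "name_inter X Y = (\<lambda>m. X m \<inter> Y m)"

definition name_compl :: "'a set \<Rightarrow> ('a \<Rightarrow> 'a \<Rightarrow> bool) \<Rightarrow> (nat \<Rightarrow> 'a set) \<Rightarrow> nat \<Rightarrow> 'a set" where
  "name_compl P le X = (\<lambda>m. {p\<in>P. \<forall>r\<in>P. le r p \<longrightarrow> r \<notin> X m})"

definition check_name :: "'a set \<Rightarrow> nat set \<Rightarrow> nat \<Rightarrow> 'a set" where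
  "check_name P A = (\<lambda>m. if m \<in> A then P else {})"

text \<open>A P-name of an ultrafilter on omega extending D, given by its Boolean values:
  U X = {p. p forces X in D'} for every name X of a subset of omega.  The clauses say that
  P forces: D' is upward closed, closed under intersections, does not contain the empty set,
  contains X or omega minus X for every X, and contains every ground set of D.\<close>
definition uf_name :: "'a set \<Rightarrow> ('a \<Rightarrow> 'a \<Rightarrow> bool) \<Rightarrow> nat set set
    \<Rightarrow> ((nat \<Rightarrow> 'a set) \<Rightarrow> 'a set) \<Rightarrow> bool" where
  "uf_name P le D U \<longleftrightarrow>
     (\<forall>X. nat_name P le X \<longrightarrow> reg_open P le (U X))
   \<and> (\<forall>X Y. \<forall>p\<in>P. nat_name P le X \<longrightarrow> nat_name P le Y \<longrightarrow>
        forces_subset P le p X Y \<longrightarrow> p \<in> U X \<longrightarrow> p \<in> U Y)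
   \<and> (\<forall>X Y. \<forall>p\<in>P. nat_name P le X \<longrightarrow> nat_name P le Y \<longrightarrow>
        p \<in> U X \<longrightarrow> p \<in> U Y \<longrightarrow> p \<in> U (name_inter X Y))
   \<and> (\<forall>p\<in>P. p \<notin> U (\<lambda>m. {}))
   \<and> (\<forall>X. nat_name P le X \<longrightarrow> (\<forall>p\<in>P. \<exists>r\<in>P. le r p \<and> (r \<in> U X \<or> r \<in> U (name_compl P le X))))
   \<and> (\<forall>A\<in>D. U (check_name P A) = P)"

text \<open>The name of {m. q_m in G}: p forces q_m in G iff every extension of p is compatible with q_m.\<close>
definition G_name :: "'a set \<Rightarrow> ('a \<Rightarrow> 'a \<Rightarrow> bool) \<Rightarrow> (nat \<Rightarrow> 'a) \<Rightarrow> nat \<Rightarrow> 'a set" where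
  "G_name P le qs = (\<lambda>m. {p\<in>P. \<forall>r\<in>P. le r p \<longrightarrow> compat P le r (qs m)})"

definition D_lim_linked_by :: "'a set \<Rightarrow> ('a \<Rightarrow> 'a \<Rightarrow> bool) \<Rightarrow> 'a set \<Rightarrow> nat set set
    \<Rightarrow> ((nat \<Rightarrow> 'a) \<Rightarrow> 'a) \<Rightarrow> bool" where
  "D_lim_linked_by P le Q D lim \<longleftrightarrow> lim_fun P Q lim \<and>
     (\<exists>U. uf_name P le D U \<and> (\<forall>qs\<in>seqs Q. lim qs \<in> U (G_name P le qs)))"

definition uf_lim_linked :: "'a set \<Rightarrow> ('a \<Rightarrow> 'a \<Rightarrow> bool) \<Rightarrow> 'a set \<Rightarrow> bool" where
  "uf_lim_linked P le Q \<longleftrightarrow>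
     (\<forall>D. nonprincipal_ultrafilter D \<longrightarrow> (\<exists>lim. D_lim_linked_by P le Q D lim))"

end

theory Submission
  imports Defs
begin

(* Read a pair (p, X) of a condition and a name of a subset of omega as the requirement that p
   forces X into the ultrafilter D'.  A set of requirements is consistent if no condition below
   finitely many of them forces their named sets to have empty intersection.  The requirements
   (p, A) for A in D and (lim qs, {m. qs m in G}) are consistent by (star)_n: below the limits of
   n sequences, the set of m at which all the m-th terms have a common extension lies in D, so it
   meets the finitely many members of D involved, and a common extension at such an m lies in all
   the named sets.  By Zorn's lemma the requirements extend to a maximal consistent set M, and the
   Boolean value of "X in D'" is the set of p below which densely many conditions force X to
   contain an intersection of finitely many requirements of M.  This set is regular open,
   consistency keeps the empty set out, and maximality decides every X. *)

definition forces_Inter_subset :: "'a set \<Rightarrow> ('a \<Rightarrow> 'a \<Rightarrow> bool) \<Rightarrow> 'a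
    \<Rightarrow> ('a \<times> (nat \<Rightarrow> 'a set)) set \<Rightarrow> (nat \<Rightarrow> 'a set) \<Rightarrow> bool" where
  "forces_Inter_subset P le r F X \<longleftrightarrow>
     (\<forall>m. \<forall>s\<in>P. le s r \<longrightarrow> (\<forall>x\<in>F. s \<in> snd x m) \<longrightarrow> s \<in> X m)"

definition forces_generated :: "'a set \<Rightarrow> ('a \<Rightarrow> 'a \<Rightarrow> bool)
    \<Rightarrow> ('a \<times> (nat \<Rightarrow> 'a set)) set \<Rightarrow> 'a \<Rightarrow> (nat \<Rightarrow> 'a set) \<Rightarrow> bool" where
  "forces_generated P le B r X \<longleftrightarrow>
     (\<exists>F. finite F \<and> F \<subseteq> B \<and> (\<forall>x\<in>F. le r (fst x)) \<and> forces_Inter_subset P le r F X)"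

definition consistent_pairs :: "'a set \<Rightarrow> ('a \<Rightarrow> 'a \<Rightarrow> bool)
    \<Rightarrow> ('a \<times> (nat \<Rightarrow> 'a set)) set \<Rightarrow> bool" where
  "consistent_pairs P le B \<longleftrightarrow> (\<forall>r\<in>P. \<not> forces_generated P le B r (\<lambda>m. {}))"

definition down_closed_name :: "'a set \<Rightarrow> ('a \<Rightarrow> 'a \<Rightarrow> bool) \<Rightarrow> (nat \<Rightarrow> 'a set) \<Rightarrow> bool" where
  "down_closed_name P le X \<longleftrightarrow> (\<forall>m. \<forall>p\<in>X m. \<forall>q\<in>P. le q p \<longrightarrow> q \<in> X m)"

definition name_pairs :: "'a set \<Rightarrow> ('a \<Rightarrow> 'a \<Rightarrow> bool) \<Rightarrow> ('a \<times> (nat \<Rightarrow> 'a set)) set" where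
  "name_pairs P le = {x. fst x \<in> P \<and> down_closed_name P le (snd x)}"

definition maximal_consistent :: "'a set \<Rightarrow> ('a \<Rightarrow> 'a \<Rightarrow> bool)
    \<Rightarrow> ('a \<times> (nat \<Rightarrow> 'a set)) set \<Rightarrow> bool" where
  "maximal_consistent P le M \<longleftrightarrow> M \<subseteq> name_pairs P le \<and> consistent_pairs P le M
     \<and> (\<forall>M'. M \<subseteq> M' \<longrightarrow> M' \<subseteq> name_pairs P le \<longrightarrow> consistent_pairs P le M' \<longrightarrow> M' = M)"

definition dense_below :: "'a set \<Rightarrow> ('a \<Rightarrow> 'a \<Rightarrow> bool) \<Rightarrow> 'a set \<Rightarrow> 'a \<Rightarrow> bool" where
  "dense_below P le S p \<longleftrightarrow> (\<forall>q\<in>P. le q p \<longrightarrow> (\<exists>r\<in>P. le r q \<and> r \<in> S))"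

definition generated_name :: "'a set \<Rightarrow> ('a \<Rightarrow> 'a \<Rightarrow> bool)
    \<Rightarrow> ('a \<times> (nat \<Rightarrow> 'a set)) set \<Rightarrow> (nat \<Rightarrow> 'a set) \<Rightarrow> 'a set" where
  "generated_name P le B X = {p\<in>P. dense_below P le {r. forces_generated P le B r X} p}"

lemma forces_generated_Int:
  assumes "forces_generated P le B r X" "forces_generated P le B r Y"
  shows "forces_generated P le B r (name_inter X Y)"
proof -
  obtain F1 F2 where F: "finite F1" "F1 \<subseteq> B" "\<forall>x\<in>F1. le r (fst x)"
      "forces_Inter_subset P le r F1 X" "finite F2" "F2 \<subseteq> B" "\<forall>x\<in>F2. le r (fst x)"
      "forces_Inter_subset P le r F2 Y"
    using assms unfolding forces_generated_def by blast
  have "forces_Inter_subset P le r (F1 \<union> F2) (name_inter X Y)"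
    using F(4,8) unfolding forces_Inter_subset_def name_inter_def by blast
  moreover have "finite (F1 \<union> F2)" "F1 \<union> F2 \<subseteq> B" "\<forall>x\<in>F1 \<union> F2. le r (fst x)"
    using F by auto
  ultimately show ?thesis unfolding forces_generated_def by blast
qed

lemma consistent_Union_chain:
  assumes "\<C> \<noteq> {}" "subset.chain \<A> \<C>" "\<forall>B\<in>\<C>. consistent_pairs P le B"
  shows "consistent_pairs P le (\<Union>\<C>)"
  unfolding consistent_pairs_def
proof (intro ballI notI)
  fix r assume r: "r \<in> P" and "forces_generated P le (\<Union>\<C>) r (\<lambda>m. {})"
  then obtain F where F: "finite F" "F \<subseteq> \<Union>\<C>" "\<forall>x\<in>F. le r (fst x)"
    "forces_Inter_subset P le r F (\<lambda>m. {})" unfolding forces_generated_def by blast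
  obtain B where "B \<in> \<C>" "F \<subseteq> B" using finite_subset_Union_chain[OF F(1,2) assms(1,2)] .
  then have "consistent_pairs P le B" "forces_generated P le B r (\<lambda>m. {})"
    using assms(3) F unfolding forces_generated_def by blast+
  then show False using r unfolding consistent_pairs_def by blast
qed

lemma maximal_consistent_extension:
  assumes "B \<subseteq> name_pairs P le" "consistent_pairs P le B"
  shows "\<exists>M. B \<subseteq> M \<and> maximal_consistent P le M"
proof -
  define \<A> where "\<A> = {M. B \<subseteq> M \<and> M \<subseteq> name_pairs P le \<and> consistent_pairs P le M}"
  have "\<exists>M\<in>\<A>. \<forall>M'\<in>\<A>. M \<subseteq> M' \<longrightarrow> M' = M"
  proof (rule subset_Zorn_nonempty)
    show "\<A> \<noteq> {}" using assms unfolding \<A>_def by blast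
  next
    fix \<C> assume ne: "\<C> \<noteq> {}" and chain: "subset.chain \<A> \<C>"
    then have C: "\<C> \<subseteq> \<A>" by (simp add: subset.chain_def)
    have "consistent_pairs P le (\<Union>\<C>)"
      using consistent_Union_chain[OF ne chain] C unfolding \<A>_def by blast
    moreover have "B \<subseteq> \<Union>\<C>" "\<Union>\<C> \<subseteq> name_pairs P le"
      using ne C unfolding \<A>_def by blast+
    ultimately show "\<Union>\<C> \<in> \<A>" unfolding \<A>_def by blast
  qed
  then obtain M where M: "B \<subseteq> M" "M \<subseteq> name_pairs P le" "consistent_pairs P le M"
    and max: "\<forall>M'\<in>\<A>. M \<subseteq> M' \<longrightarrow> M' = M"
    unfolding \<A>_def by blast
  have "maximal_consistent P le M"
    unfolding maximal_consistent_def
  proof (intro conjI allI impI M(2,3))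
    fix M' assume "M \<subseteq> M'" "M' \<subseteq> name_pairs P le" "consistent_pairs P le M'"
    moreover from this have "M' \<in> \<A>" using M(1) unfolding \<A>_def by blast
    ultimately show "M' = M" using max by blast
  qed
  with M(1) show ?thesis by blast
qed

context
  fixes P :: "'a set" and le :: "'a \<Rightarrow> 'a \<Rightarrow> bool"
  assumes po: "poset P le"
begin

lemma poset_refl: "p \<in> P \<Longrightarrow> le p p"
  using po unfolding poset_def by blast

lemma poset_trans: "p \<in> P \<Longrightarrow> q \<in> P \<Longrightarrow> r \<in> P \<Longrightarrow> le p q \<Longrightarrow> le q r \<Longrightarrow> le p r"
  using po unfolding poset_def by blast

lemma reg_open_dense_below: "reg_open P le {p\<in>P. dense_below P le S p}"
  unfolding reg_open_def
proof (intro conjI ballI impI subsetI)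
  fix p q assume "p \<in> {p\<in>P. dense_below P le S p}" "q \<in> P" "le q p"
  then show "q \<in> {p\<in>P. dense_below P le S p}"
    unfolding dense_below_def by (blast intro: poset_trans)
next
  fix p assume p: "p \<in> P"
    and dense: "\<forall>q\<in>P. le q p \<longrightarrow> (\<exists>r\<in>P. le r q \<and> r \<in> {p\<in>P. dense_below P le S p})"
  have "dense_below P le S p"
    unfolding dense_below_def
  proof (intro ballI impI)
    fix q assume q: "q \<in> P" "le q p"
    then obtain r where r: "r \<in> P" "le r q" "dense_below P le S r" using dense by blast
    then obtain r' where "r' \<in> P" "le r' r" "r' \<in> S"
      unfolding dense_below_def by (blast intro: poset_refl)
    then show "\<exists>r\<in>P. le r q \<and> r \<in> S" using r q by (blast intro: poset_trans)
  qed
  then show "p \<in> {p\<in>P. dense_below P le S p}" using p by blast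
qed auto

lemma dense_below_Int:
  assumes p: "p \<in> P" and S: "dense_below P le S p" and T: "dense_below P le T p"
    and T_down: "\<And>r r'. r \<in> T \<Longrightarrow> r \<in> P \<Longrightarrow> r' \<in> P \<Longrightarrow> le r' r \<Longrightarrow> r' \<in> T"
  shows "dense_below P le (S \<inter> T) p"
  unfolding dense_below_def
proof (intro ballI impI)
  fix q assume q: "q \<in> P" "le q p"
  then obtain r where r: "r \<in> P" "le r q" "r \<in> T"
    using T unfolding dense_below_def by blast
  have "le r p" using poset_trans[of r q p] r q p by blast
  then obtain r' where r': "r' \<in> P" "le r' r" "r' \<in> S"
    using S r(1) unfolding dense_below_def by blast
  have "le r' q" using poset_trans[of r' r q] r r' q by blast
  then show "\<exists>r\<in>P. le r q \<and> r \<in> S \<inter> T"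
    using r r' T_down by blast
qed

lemma forces_generated_anti:
  assumes B: "B \<subseteq> name_pairs P le" and r: "r \<in> P" "r' \<in> P" "le r' r"
    and gen: "forces_generated P le B r X"
  shows "forces_generated P le B r' X"
proof -
  obtain F where F: "finite F" "F \<subseteq> B" "\<forall>x\<in>F. le r (fst x)" "forces_Inter_subset P le r F X"
    using gen unfolding forces_generated_def by blast
  have "le r' (fst x)" if "x \<in> F" for x
  proof -
    have "fst x \<in> P" using that F(2) B unfolding name_pairs_def by blast
    then show ?thesis using poset_trans[of r' r "fst x"] r F(3) that by blast
  qed
  moreover have "forces_Inter_subset P le r' F X"
    unfolding forces_Inter_subset_def
  proof (intro allI ballI impI)
    fix m s assume "s \<in> P" "le s r'" "\<forall>x\<in>F. s \<in> snd x m"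
    moreover from this have "le s r" using poset_trans[of s r' r] r by blast
    ultimately show "s \<in> X m" using F(4) unfolding forces_Inter_subset_def by blast
  qed
  ultimately show ?thesis using F(1,2) unfolding forces_generated_def by blast
qed

lemma forces_generated_imp_generated_name:
  assumes "B \<subseteq> name_pairs P le" "p \<in> P" "forces_generated P le B p X"
  shows "p \<in> generated_name P le B X"
  using assms forces_generated_anti poset_refl
  unfolding generated_name_def dense_below_def by blast

lemma mem_generated_name:
  assumes "B \<subseteq> name_pairs P le" "x \<in> B"
  shows "fst x \<in> generated_name P le B (snd x)"
proof -
  have "fst x \<in> P" using assms unfolding name_pairs_def by blast
  moreover have "forces_Inter_subset P le (fst x) {x} (snd x)"
    unfolding forces_Inter_subset_def by blast
  ultimately have "forces_generated P le B (fst x) (snd x)"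
    using assms(2) poset_refl unfolding forces_generated_def by blast
  with assms(1) \<open>fst x \<in> P\<close> show ?thesis by (rule forces_generated_imp_generated_name)
qed

lemma generated_name_forces_subset:
  assumes "p \<in> P" "forces_subset P le p X Y" "p \<in> generated_name P le B X"
  shows "p \<in> generated_name P le B Y"
proof -
  have "forces_generated P le B r Y" if r: "r \<in> P" "le r p" "forces_generated P le B r X" for r
  proof -
    have "forces_Inter_subset P le r F Y" if "forces_Inter_subset P le r F X" for F
      unfolding forces_Inter_subset_def
    proof (intro allI ballI impI)
      fix m s assume s: "s \<in> P" "le s r" "\<forall>x\<in>F. s \<in> snd x m"
      then have "s \<in> X m" using that unfolding forces_Inter_subset_def by blast
      moreover have "le s p" using poset_trans[of s r p] s r assms(1) by blast
      ultimately show "s \<in> Y m" using assms(2) s(1) unfolding forces_subset_def by blast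
    qed
    then show ?thesis using r(3) unfolding forces_generated_def by blast
  qed
  moreover have "le r p" if "r \<in> P" "le r q" "q \<in> P" "le q p" for r q
    using poset_trans[of r q p] that assms(1) by blast
  ultimately show ?thesis
    using assms(1,3) unfolding generated_name_def dense_below_def by blast
qed

lemma generated_name_Int:
  assumes B: "B \<subseteq> name_pairs P le"
    and X: "p \<in> generated_name P le B X" and Y: "p \<in> generated_name P le B Y"
  shows "p \<in> generated_name P le B (name_inter X Y)"
proof -
  have p: "p \<in> P" using X unfolding generated_name_def by blast
  have "dense_below P le ({r. forces_generated P le B r X} \<inter> {r. forces_generated P le B r Y}) p"
  proof (rule dense_below_Int[OF p])
    show "dense_below P le {r. forces_generated P le B r X} p"
      "dense_below P le {r. forces_generated P le B r Y} p"
      using X Y unfolding generated_name_def by blast+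
  qed (use forces_generated_anti[OF B] in blast)
  then have "dense_below P le {r. forces_generated P le B r (name_inter X Y)} p"
    using forces_generated_Int[of P le B] unfolding dense_below_def by blast
  with p show ?thesis unfolding generated_name_def by blast
qed

lemma generated_name_empty:
  assumes "consistent_pairs P le B"
  shows "p \<notin> generated_name P le B (\<lambda>m. {})"
  using assms poset_refl unfolding generated_name_def dense_below_def consistent_pairs_def by blast

lemma inconsistent_insert:
  assumes M: "consistent_pairs P le M" "M \<subseteq> name_pairs P le"
    and ins: "\<not> consistent_pairs P le (insert (p, X) M)"
  shows "\<exists>r\<in>P. le r p \<and> forces_generated P le M r (name_compl P le X)"
proof -
  obtain r F where r: "r \<in> P" and F: "finite F" "F \<subseteq> insert (p, X) M" "\<forall>x\<in>F. le r (fst x)"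
    and F_empty: "forces_Inter_subset P le r F (\<lambda>m. {})"
    using ins unfolding consistent_pairs_def forces_generated_def by blast
  define F0 where "F0 = F - {(p, X)}"
  have F0: "finite F0" "F0 \<subseteq> M" "\<forall>x\<in>F0. le r (fst x)"
    using F unfolding F0_def by auto
  have "forces_Inter_subset P le r F0 (name_compl P le X)"
    unfolding forces_Inter_subset_def name_compl_def
  proof (intro allI ballI impI CollectI conjI)
    fix m s t assume s: "s \<in> P" "le s r" "\<forall>x\<in>F0. s \<in> snd x m" and t: "t \<in> P" "le t s"
    have "\<forall>x\<in>F0. t \<in> snd x m"
      using s(3) t F0(2) M(2) unfolding name_pairs_def down_closed_name_def by blast
    then have "t \<in> X m \<Longrightarrow> \<forall>x\<in>F. t \<in> snd x m" unfolding F0_def by auto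
    then show "t \<notin> X m"
      using F_empty s t r unfolding forces_Inter_subset_def by (blast intro: poset_trans)
  qed
  then have gen: "forces_generated P le M r (name_compl P le X)"
    using F0 unfolding forces_generated_def by blast
  have "(p, X) \<in> F"
  proof (rule ccontr)
    assume "(p, X) \<notin> F"
    then have "forces_generated P le M r (\<lambda>m. {})"
      using F F_empty unfolding forces_generated_def by blast
    then show False using M(1) r unfolding consistent_pairs_def by blast
  qed
  then show ?thesis using F(3) r gen by force
qed

lemma maximal_consistent_decides:
  assumes M: "maximal_consistent P le M" and X: "nat_name P le X" and p: "p \<in> P"
  shows "\<exists>r\<in>P. le r p \<and>
    (r \<in> generated_name P le M X \<or> r \<in> generated_name P le M (name_compl P le X))"
proof -
  have M_pairs: "M \<subseteq> name_pairs P le" and M_cons: "consistent_pairs P le M"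
    using M unfolding maximal_consistent_def by blast+
  show ?thesis
  proof (cases "consistent_pairs P le (insert (p, X) M)")
    case True
    have "down_closed_name P le X"
      using X unfolding nat_name_def reg_open_def down_closed_name_def by blast
    then have "insert (p, X) M \<subseteq> name_pairs P le"
      using M_pairs p unfolding name_pairs_def by auto
    with True have "insert (p, X) M = M"
      using M unfolding maximal_consistent_def by blast
    then have "p \<in> generated_name P le M X"
      using mem_generated_name[OF M_pairs, of "(p, X)"] by auto
    then show ?thesis using p poset_refl by blast
  next
    case False
    then obtain r where "r \<in> P" "le r p" "forces_generated P le M r (name_compl P le X)"
      using inconsistent_insert[OF M_cons M_pairs] by blast
    then show ?thesis using forces_generated_imp_generated_name[OF M_pairs] by blast
  qed
qed

lemma mem_G_name_below:
  assumes s: "s \<in> P" "qs m \<in> P" "le s (qs m)"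
  shows "s \<in> G_name P le qs m"
  unfolding G_name_def compat_def
proof (intro CollectI conjI ballI impI s(1))
  fix t assume "t \<in> P" "le t s"
  then show "\<exists>u\<in>P. le u t \<and> le u (qs m)"
    using poset_refl[of t] poset_trans[of t s "qs m"] s by blast
qed

lemma down_closed_G_name: "down_closed_name P le (G_name P le qs)"
  unfolding down_closed_name_def G_name_def
proof (intro allI ballI impI CollectI conjI)
  fix m p q t assume "p \<in> {p\<in>P. \<forall>r\<in>P. le r p \<longrightarrow> compat P le r (qs m)}"
    "q \<in> P" "le q p" "t \<in> P" "le t q"
  then show "compat P le t (qs m)" using poset_trans[of t q p] by blast
qed

lemma maximal_consistent_uf_name:
  assumes M: "maximal_consistent P le M"
    and D: "\<forall>A\<in>D. \<forall>p\<in>P. (p, check_name P A) \<in> M"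
  shows "uf_name P le D (generated_name P le M)"
proof -
  have M_pairs: "M \<subseteq> name_pairs P le" and M_cons: "consistent_pairs P le M"
    using M unfolding maximal_consistent_def by blast+
  have "generated_name P le M (check_name P A) = P" if "A \<in> D" for A
  proof
    show "P \<subseteq> generated_name P le M (check_name P A)"
      using mem_generated_name[OF M_pairs] D that by fastforce
  qed (auto simp: generated_name_def)
  moreover have "reg_open P le (generated_name P le M X)" for X
    unfolding generated_name_def by (rule reg_open_dense_below)
  ultimately show ?thesis
    unfolding uf_name_def
    using generated_name_forces_subset generated_name_Int[OF M_pairs]
      generated_name_empty[OF M_cons] maximal_consistent_decides[OF M]
    by blast
qed

end

lemma nonprincipal_ultrafilter_Int:
  "nonprincipal_ultrafilter D \<Longrightarrow> A \<in> D \<Longrightarrow> B \<in> D \<Longrightarrow> A \<inter> B \<in> D"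
  unfolding nonprincipal_ultrafilter_def by blast

lemma nonprincipal_ultrafilter_Inter:
  assumes D: "nonprincipal_ultrafilter D" and "finite K" "K \<subseteq> D"
  shows "\<Inter>K \<in> D"
  using assms(2,3)
proof (induction K rule: finite_induct)
  case empty then show ?case using D unfolding nonprincipal_ultrafilter_def by simp
next
  case (insert A K) then show ?case using nonprincipal_ultrafilter_Int[OF D] by simp
qed

lemma nonprincipal_ultrafilter_nonempty:
  "nonprincipal_ultrafilter D \<Longrightarrow> A \<in> D \<Longrightarrow> \<exists>m. m \<in> A"
  unfolding nonprincipal_ultrafilter_def by blast

lemma star_cond_finite_set:
  assumes star: "\<forall>n. star_cond P le Q D lim n"
    and S: "finite S" "S \<subseteq> seqs Q" and r: "r \<in> P" "\<forall>qs\<in>S. le r (lim qs)"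
  shows "{m. \<exists>s\<in>P. le s r \<and> (\<forall>qs\<in>S. le s (qs m))} \<in> D"
proof -
  obtain n and qss :: "nat \<Rightarrow> nat \<Rightarrow> 'a" where enum: "S = qss ` {j. j < n}"
    using finite_imp_nat_seg_image_inj_on[OF S(1)] by auto
  then have "\<forall>j<n. qss j \<in> seqs Q" "\<forall>j<n. le r (lim (qss j))"
    using S(2) r(2) by auto
  then have "{m. \<exists>s\<in>P. le s r \<and> (\<forall>j<n. le s (qss j m))} \<in> D"
    using star[unfolded star_cond_def, rule_format, of n qss r] r(1) by blast
  moreover have "(\<forall>qs\<in>S. le s (qs m)) \<longleftrightarrow> (\<forall>j<n. le s (qss j m))" for s m
    using enum by auto
  ultimately show ?thesis by simp
qed

lemma check_pairs_full:
  assumes D: "nonprincipal_ultrafilter D"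
    and F: "finite F" "F \<subseteq> {(p, check_name P A) | p A. p \<in> P \<and> A \<in> D}"
  shows "{m. \<forall>x\<in>F. snd x m = P} \<in> D"
proof -
  have "{m. snd x m = P} \<in> D" if x: "x \<in> F" for x
  proof -
    from x F(2) obtain p A where x: "x = (p, check_name P A)" and "A \<in> D" by blast
    moreover have "A \<subseteq> {m. snd x m = P}" unfolding x check_name_def by auto
    ultimately show ?thesis using D unfolding nonprincipal_ultrafilter_def by metis
  qed
  then have "\<Inter>((\<lambda>x. {m. snd x m = P}) ` F) \<in> D"
    using F(1) by (intro nonprincipal_ultrafilter_Inter[OF D]) auto
  moreover have "\<Inter>((\<lambda>x. {m. snd x m = P}) ` F) = {m. \<forall>x\<in>F. snd x m = P}" by auto
  ultimately show ?thesis by simp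
qed

definition lim_pairs :: "'a set \<Rightarrow> ('a \<Rightarrow> 'a \<Rightarrow> bool) \<Rightarrow> 'a set \<Rightarrow> nat set set
    \<Rightarrow> ((nat \<Rightarrow> 'a) \<Rightarrow> 'a) \<Rightarrow> ('a \<times> (nat \<Rightarrow> 'a set)) set" where
  "lim_pairs P le Q D lim = {(p, check_name P A) | p A. p \<in> P \<and> A \<in> D}
     \<union> (\<lambda>qs. (lim qs, G_name P le qs)) ` seqs Q"

lemma lim_pairs_name_pairs:
  assumes "poset P le" "lim_fun P Q lim"
  shows "lim_pairs P le Q D lim \<subseteq> name_pairs P le"
proof -
  have "down_closed_name P le (check_name P A)" for A
    unfolding down_closed_name_def check_name_def by simp
  then show ?thesis
    using assms down_closed_G_name unfolding lim_pairs_def name_pairs_def lim_fun_def by auto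
qed

lemma consistent_lim_pairs:
  assumes po: "poset P le" and QP: "Q \<subseteq> P" and D: "nonprincipal_ultrafilter D"
    and star: "\<forall>n. star_cond P le Q D lim n"
  shows "consistent_pairs P le (lim_pairs P le Q D lim)"
  unfolding consistent_pairs_def forces_generated_def
proof (intro ballI notI)
  define C where "C = {(p, check_name P A) | p A. p \<in> P \<and> A \<in> D}"
  define lim_pair where "lim_pair = (\<lambda>qs. (lim qs, G_name P le qs))"
  have pairs: "lim_pairs P le Q D lim = C \<union> lim_pair ` seqs Q"
    unfolding lim_pairs_def C_def lim_pair_def by (rule refl)
  fix r assume r: "r \<in> P" and "\<exists>F. finite F \<and> F \<subseteq> lim_pairs P le Q D lim
      \<and> (\<forall>x\<in>F. le r (fst x)) \<and> forces_Inter_subset P le r F (\<lambda>m. {})"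
  then obtain F where F: "finite F" "F \<subseteq> C \<union> lim_pair ` seqs Q" "\<forall>x\<in>F. le r (fst x)"
    and F_empty: "forces_Inter_subset P le r F (\<lambda>m. {})"
    unfolding pairs by blast
  have "F - C \<subseteq> lim_pair ` seqs Q" using F(2) by blast
  then obtain S where S: "S \<subseteq> seqs Q" "finite S" "F - C = lim_pair ` S"
    using finite_subset_image[of "F - C" lim_pair "seqs Q"] F(1) by blast
  have "finite (F \<inter> C)" "F \<inter> C \<subseteq> C" using F(1) by auto
  then have "{m. \<forall>x\<in>F \<inter> C. snd x m = P} \<in> D"
    unfolding C_def by (rule check_pairs_full[OF D])
  moreover have "\<forall>qs\<in>S. le r (lim qs)"
  proof
    fix qs assume "qs \<in> S"
    then have "lim_pair qs \<in> F" using S(3) by blast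
    then show "le r (lim qs)" using F(3) unfolding lim_pair_def by force
  qed
  then have "{m. \<exists>s\<in>P. le s r \<and> (\<forall>qs\<in>S. le s (qs m))} \<in> D"
    using star_cond_finite_set[OF star S(2,1) r] by blast
  ultimately have "{m. \<forall>x\<in>F \<inter> C. snd x m = P} \<inter> {m. \<exists>s\<in>P. le s r \<and> (\<forall>qs\<in>S. le s (qs m))} \<in> D"
    by (rule nonprincipal_ultrafilter_Int[OF D])
  then obtain m where m: "\<forall>x\<in>F \<inter> C. snd x m = P"
    and "m \<in> {m. \<exists>s\<in>P. le s r \<and> (\<forall>qs\<in>S. le s (qs m))}"
    using nonprincipal_ultrafilter_nonempty[OF D] by blast
  then obtain s where s: "s \<in> P" "le s r" "\<forall>qs\<in>S. le s (qs m)" by blast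
  have "s \<in> snd x m" if x: "x \<in> F" for x
  proof (cases "x \<in> C")
    case True
    then have "snd x m = P" using m x by blast
    then show ?thesis using s(1) by simp
  next
    case False
    with x S(3) obtain qs where qs: "qs \<in> S" "x = lim_pair qs" by blast
    then have "qs m \<in> P" using S(1) QP unfolding seqs_def by blast
    then show ?thesis
      using mem_G_name_below[OF po s(1)] s(3) qs unfolding lim_pair_def by simp
  qed
  then show False using F_empty s unfolding forces_Inter_subset_def by blast
qed

lemma suff_D_lim_linked_imp_D_lim_linked:
  assumes po: "poset P le" and QP: "Q \<subseteq> P" and D: "nonprincipal_ultrafilter D"
    and linked: "suff_D_lim_linked_by P le Q D lim"
  shows "D_lim_linked_by P le Q D lim"
proof -
  have lim: "lim_fun P Q lim" and star: "\<forall>n. star_cond P le Q D lim n"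
    using linked unfolding suff_D_lim_linked_by_def by blast+
  obtain M where M: "lim_pairs P le Q D lim \<subseteq> M" "maximal_consistent P le M"
    using maximal_consistent_extension[OF lim_pairs_name_pairs[OF po lim]
        consistent_lim_pairs[OF po QP D star]] by blast
  have "uf_name P le D (generated_name P le M)"
    using M unfolding lim_pairs_def by (intro maximal_consistent_uf_name[OF po]) auto
  moreover have "lim qs \<in> generated_name P le M (G_name P le qs)" if "qs \<in> seqs Q" for qs
    using mem_generated_name[OF po, of M "(lim qs, G_name P le qs)"] M that
    unfolding lim_pairs_def maximal_consistent_def by auto
  ultimately show ?thesis using lim unfolding D_lim_linked_by_def by blast
qed

theorem lemma3p27:
  fixes P Q :: "'a set" and le :: "'a \<Rightarrow> 'a \<Rightarrow> bool"
    and D :: "nat set set" and lim :: "(nat \<Rightarrow> 'a) \<Rightarrow> 'a"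
  assumes "poset P le" and "Q \<subseteq> P"
    and "nonprincipal_ultrafilter D"
    and "suff_D_lim_linked_by P le Q D lim"
  shows "D_lim_linked_by P le Q D lim \<and> (suff_uf_lim_linked P le Q \<longrightarrow> uf_lim_linked P le Q)"
  using suff_D_lim_linked_imp_D_lim_linked[OF assms(1,2)] assms(3,4)
  unfolding suff_uf_lim_linked_def uf_lim_linked_def by blast

end
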